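(* Let $k$ be a field, let $A$ be a $k$-algebra and let $K/k$ be a field extension. If $A\otimes_k K$ is just infinite over $K$, then $A$ is just infinite over $k$.
   Context: All rings are associative unital algebras over a field. A $k$-algebra $A$ is called just infinite if $\dim_k(A)=\infty$ and every nonzero two-sided ideal of $A$ has finite codimension in $A$. *)

theory Defs
  imports Complex_Main
begin

definition algebra_over :: "('k::field \<Rightarrow> 'a::ring_1 \<Rightarrow> 'a) \<Rightarrow> bool" where
  "algebra_over s \<longleftrightarrow> vector_space s \<and>
     (\<forall>c x y. s c (x * y) = s c x * y \<and> s c (x * y) = x * s c y)"

definition two_sided_ideal :: "'a::ring_1 set \<Rightarrow> bool" where
  "two_sided_ideal I \<longleftrightarrow> 0 \<in> I \<and> (\<forall>x\<in>I. \<forall>y\<in>I. x + y \<in> I) \<and> (\<forall>x\<in>I. - x \<in> I) \<and>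
     (\<forall>x\<in>I. \<forall>a. a * x \<in> I \<and> x * a \<in> I)"

definition fin_dim :: "('k::field \<Rightarrow> 'a::ring_1 \<Rightarrow> 'a) \<Rightarrow> bool" where
  "fin_dim s \<longleftrightarrow> (\<exists>B. finite B \<and> module.span s B = UNIV)"

text \<open>Finite codimension of a subset I: the quotient A/I is spanned by
  the image of a finite set, i.e. finitely many elements together with I span A.\<close>
definition fin_codim :: "('k::field \<Rightarrow> 'a::ring_1 \<Rightarrow> 'a) \<Rightarrow> 'a set \<Rightarrow> bool" where
  "fin_codim s I \<longleftrightarrow> (\<exists>B. finite B \<and> module.span s (B \<union> I) = UNIV)"

definition just_infinite :: "('k::field \<Rightarrow> 'a::ring_1 \<Rightarrow> 'a) \<Rightarrow> bool" where
  "just_infinite s \<longleftrightarrow> algebra_over s \<and> \<not> fin_dim s \<and>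
     (\<forall>I. two_sided_ideal I \<and> I \<noteq> {0} \<longrightarrow> fin_codim s I)"

text \<open>A field extension K/k, given by a (necessarily injective) ring hom k \<rightarrow> K.\<close>
definition field_ext :: "('k::field \<Rightarrow> 'K::field) \<Rightarrow> bool" where
  "field_ext \<sigma> \<longleftrightarrow> \<sigma> 1 = 1 \<and> (\<forall>x y. \<sigma> (x + y) = \<sigma> x + \<sigma> y \<and> \<sigma> (x * y) = \<sigma> x * \<sigma> y)"

text \<open>(T, sT, \<iota>) is the scalar extension A \<otimes>_k K of the k-algebra (A, sA):
  T is a K-algebra, \<iota> : A \<rightarrow> T is a unital ring hom that is k-linear
  (K acting via \<sigma>), \<iota>(A) spans T over K, and \<iota> maps k-linearly independent
  sets injectively onto K-linearly independent sets.  Equivalently, the induced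
  K-algebra map A \<otimes>_k K \<rightarrow> T, a \<otimes> \<lambda> \<mapsto> \<lambda> \<iota>(a), is an isomorphism.\<close>
definition is_base_change ::
  "('k::field \<Rightarrow> 'K::field) \<Rightarrow> ('k \<Rightarrow> 'a::ring_1 \<Rightarrow> 'a) \<Rightarrow> ('K \<Rightarrow> 't::ring_1 \<Rightarrow> 't)
     \<Rightarrow> ('a \<Rightarrow> 't) \<Rightarrow> bool" where
  "is_base_change \<sigma> sA sT \<iota> \<longleftrightarrow> algebra_over sA \<and> algebra_over sT \<and>
     \<iota> 1 = 1 \<and> (\<forall>x y. \<iota> (x + y) = \<iota> x + \<iota> y \<and> \<iota> (x * y) = \<iota> x * \<iota> y) \<and>
     (\<forall>c x. \<iota> (sA c x) = sT (\<sigma> c) (\<iota> x)) \<and>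
     module.span sT (range \<iota>) = UNIV \<and>
     (\<forall>S. \<not> module.dependent sA S \<longrightarrow> inj_on \<iota> S \<and> \<not> module.dependent sT (\<iota> ` S))"

end

theory Submission
  imports Defs
begin

text \<open>Write \<open>T = A \<otimes>\<^sub>k K\<close>. If \<open>A\<close> had a finite spanning set, its image would span \<open>T\<close>
  over \<open>K\<close>. A nonzero ideal \<open>I\<close> of \<open>A\<close> extends to the nonzero ideal \<open>J = K \<iota>(I)\<close> of \<open>T\<close>,
  which has finite codimension, say \<open>T = span (B \<union> J)\<close>. If \<open>I\<close> had infinite codimension,
  a basis \<open>C\<close> of \<open>I\<close> could be extended by \<open>|B| + 1\<close> vectors \<open>D\<close> independent modulo \<open>I\<close>;
  their images stay independent modulo \<open>J = span (\<iota> C)\<close>, yet lie in \<open>span (B \<union> \<iota> C)\<close>,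
  which leaves room for at most \<open>|B|\<close> such vectors.\<close>

context module
begin

lemma span_finite_subset: "x \<in> span S \<Longrightarrow> \<exists>F\<subseteq>S. finite F \<and> x \<in> span F"
proof (induction rule: span_induct_alt)
  case base
  show ?case by (auto intro: span_zero)
next
  case (step c x y)
  then obtain F where "F \<subseteq> S" "finite F" "y \<in> span F" by blast
  then have "y \<in> span (insert x F)" using span_mono[of F "insert x F"] by blast
  then have "c *s x + y \<in> span (insert x F)"
    by (intro span_add span_scale span_base[of x]) simp_all
  with step.hyps \<open>F \<subseteq> S\<close> \<open>finite F\<close> show ?case by blast
qed

lemma finite_span_finite_subset:
  assumes "finite X" "X \<subseteq> span S"
  shows "\<exists>F\<subseteq>S. finite F \<and> X \<subseteq> span F"
proof -
  have "\<forall>x\<in>X. \<exists>F. F \<subseteq> S \<and> finite F \<and> x \<in> span F"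
    using assms(2) span_finite_subset by blast
  then obtain f where f: "\<And>x. x \<in> X \<Longrightarrow> f x \<subseteq> S \<and> finite (f x) \<and> x \<in> span (f x)"
    by metis
  have "x \<in> span (\<Union>(f ` X))" if "x \<in> X" for x
    using f[OF that] span_mono[of "f x" "\<Union>(f ` X)"] that by blast
  with f assms(1) show ?thesis
    by (intro exI[of _ "\<Union>(f ` X)"]) auto
qed

end

context vector_space
begin

lemma independent_complement_card_le:
  assumes "finite B" "finite D" "independent (C \<union> D)" "C \<inter> D = {}" "D \<subseteq> span (B \<union> C)"
  shows "card D \<le> card B"
proof -
  obtain F where F: "F \<subseteq> B \<union> C" "finite F" "D \<subseteq> span F"
    using finite_span_finite_subset[OF assms(2,5)] by blast
  define C0 where "C0 = F \<inter> C"
  have "finite C0" "C0 \<subseteq> C" "F \<subseteq> B \<union> C0"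
    using F(1,2) by (auto simp: C0_def)
  have "independent (C0 \<union> D)"
    using independent_mono[OF assms(3)] \<open>C0 \<subseteq> C\<close> by blast
  moreover have "C0 \<union> D \<subseteq> span (B \<union> C0)"
    using F(3) span_mono[OF \<open>F \<subseteq> B \<union> C0\<close>] span_superset[of "B \<union> C0"] by blast
  ultimately have "card (C0 \<union> D) \<le> card (B \<union> C0)"
    using independent_span_bound[of "B \<union> C0"] assms(1) \<open>finite C0\<close> by simp
  also have "\<dots> \<le> card B + card C0" by (rule card_Un_le)
  finally have "card (C0 \<union> D) \<le> card B + card C0" .
  moreover have "card (C0 \<union> D) = card C0 + card D"
    using assms(2,4) \<open>finite C0\<close> \<open>C0 \<subseteq> C\<close> by (intro card_Un_disjoint) auto
  ultimately show ?thesis by simp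
qed

lemma independent_extension_of_infinite_codim:
  assumes "\<And>F. finite F \<Longrightarrow> span (F \<union> I) \<noteq> UNIV" "independent C" "C \<subseteq> span I"
  shows "\<exists>D. finite D \<and> card D = n \<and> C \<inter> D = {} \<and> independent (C \<union> D)"
proof (induction n)
  case 0
  show ?case using assms(2) by auto
next
  case (Suc n)
  then obtain D where D: "finite D" "card D = n" "C \<inter> D = {}" "independent (C \<union> D)"
    by blast
  have "D \<union> C \<subseteq> span (D \<union> I)"
    using assms(3) span_superset[of "D \<union> I"] span_mono[of I "D \<union> I"] by blast
  then have "span (D \<union> C) \<subseteq> span (D \<union> I)"
    by (rule span_minimal) simp
  then have "span (C \<union> D) \<noteq> UNIV"
    using assms(1)[OF D(1)] by (auto simp: Un_commute)
  then obtain x where x: "x \<notin> span (C \<union> D)" by blast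
  then have "x \<notin> C \<union> D" using span_superset by blast
  moreover have "independent (insert x (C \<union> D))"
    using independent_insertI[OF x D(4)] .
  ultimately show ?case
    using D by (intro exI[of _ "insert x D"]) auto
qed

end

lemma algebra_over_vector_space: "algebra_over s \<Longrightarrow> vector_space s"
  by (simp add: algebra_over_def)

lemma algebra_over_module_hom_mult_left:
  assumes "algebra_over s"
  shows "module_hom s s (\<lambda>x. a * x)"
  using assms unfolding algebra_over_def module_hom_iff module_iff_vector_space
  by (simp add: distrib_left) metis

lemma algebra_over_module_hom_mult_right:
  assumes "algebra_over s"
  shows "module_hom s s (\<lambda>x. x * a)"
  using assms unfolding algebra_over_def module_hom_iff module_iff_vector_space
  by (simp add: distrib_right)

lemma (in module_hom) image_span_subset_span:
  "f ` S \<subseteq> m2.span X \<Longrightarrow> f ` m1.span S \<subseteq> m2.span X"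
  by (metis m2.span_minimal m2.subspace_span span_image)

lemma two_sided_ideal_span:
  assumes "algebra_over s" "module.span s G = UNIV"
    and "\<And>g x. g \<in> G \<Longrightarrow> x \<in> X \<Longrightarrow> g * x \<in> module.span s X \<and> x * g \<in> module.span s X"
  shows "two_sided_ideal (module.span s X)"
proof -
  interpret vector_space s using assms(1) by (rule algebra_over_vector_space)
  note mult_left = module_hom.image_span_subset_span[OF algebra_over_module_hom_mult_left[OF assms(1)]]
  note mult_right = module_hom.image_span_subset_span[OF algebra_over_module_hom_mult_right[OF assms(1)]]
  have generator_closed: "g * y \<in> span X \<and> y * g \<in> span X" if "g \<in> G" "y \<in> span X" for g y
  proof -
    have "(\<lambda>x. g * x) ` span X \<subseteq> span X"
      by (rule mult_left) (use assms(3)[OF that(1)] in auto)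
    moreover have "(\<lambda>x. x * g) ` span X \<subseteq> span X"
      by (rule mult_right) (use assms(3)[OF that(1)] in auto)
    ultimately show ?thesis using that(2) by blast
  qed
  have "a * y \<in> span X \<and> y * a \<in> span X" if "y \<in> span X" for a y
  proof -
    have "(\<lambda>b. b * y) ` span G \<subseteq> span X"
      by (rule mult_right) (use generator_closed that in auto)
    moreover have "(\<lambda>b. y * b) ` span G \<subseteq> span X"
      by (rule mult_left) (use generator_closed that in auto)
    ultimately show ?thesis using assms(2) by auto
  qed
  then show ?thesis
    by (auto simp: two_sided_ideal_def span_zero span_add span_neg)
qed

locale base_change =
  fixes \<sigma> :: "'k::field \<Rightarrow> 'K::field"
    and sA :: "'k \<Rightarrow> 'a::ring_1 \<Rightarrow> 'a"
    and sT :: "'K \<Rightarrow> 't::ring_1 \<Rightarrow> 't"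
    and \<iota> :: "'a \<Rightarrow> 't"
  assumes base_change: "is_base_change \<sigma> sA sT \<iota>"
begin

lemma algebra_over_A: "algebra_over sA"
  and algebra_over_T: "algebra_over sT"
  and hom_add: "\<iota> (x + y) = \<iota> x + \<iota> y"
  and hom_mult: "\<iota> (x * y) = \<iota> x * \<iota> y"
  and hom_scale: "\<iota> (sA c x) = sT (\<sigma> c) (\<iota> x)"
  and span_range: "module.span sT (range \<iota>) = UNIV"
  and independent_image:
    "\<not> module.dependent sA S \<Longrightarrow> inj_on \<iota> S \<and> \<not> module.dependent sT (\<iota> ` S)"
  using base_change by (simp_all add: is_base_change_def)

sublocale A: vector_space sA
  using algebra_over_A by (rule algebra_over_vector_space)

sublocale T: vector_space sT
  using algebra_over_T by (rule algebra_over_vector_space)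

lemma image_span_subset: "\<iota> ` A.span X \<subseteq> T.span (\<iota> ` X)"
proof
  fix y assume "y \<in> \<iota> ` A.span X"
  then obtain x where "x \<in> A.span X" "y = \<iota> x" by blast
  then show "y \<in> T.span (\<iota> ` X)"
  proof (induction x arbitrary: y rule: A.span_induct_alt)
    case base
    have "\<iota> 0 = 0" using hom_add[of 0 0] by simp
    then show ?case using base by (simp add: T.span_zero)
  next
    case (step c x z)
    then show ?case by (simp add: hom_add hom_scale T.span_add T.span_scale T.span_base)
  qed
qed

lemma nonzero_image: "x \<noteq> 0 \<Longrightarrow> \<iota> x \<noteq> 0"
  using independent_image[of "{x}"] by auto

lemma fin_dim_T_if_fin_dim_A: "fin_dim sA \<Longrightarrow> fin_dim sT"
proof -
  assume "fin_dim sA"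
  then obtain B where "finite B" "A.span B = UNIV" by (auto simp: fin_dim_def)
  then have "range \<iota> \<subseteq> T.span (\<iota> ` B)" using image_span_subset[of B] by simp
  then have "T.span (\<iota> ` B) = UNIV"
    using span_range T.span_minimal[of "range \<iota>"] by auto
  with \<open>finite B\<close> show "fin_dim sT" by (auto simp: fin_dim_def)
qed

lemma two_sided_ideal_extension: "two_sided_ideal I \<Longrightarrow> two_sided_ideal (T.span (\<iota> ` I))"
  by (rule two_sided_ideal_span[OF algebra_over_T span_range])
    (auto simp: two_sided_ideal_def hom_mult[symmetric] intro!: T.span_base)

lemma fin_codim_if_fin_codim_extension:
  assumes "fin_codim sT (T.span (\<iota> ` I))"
  shows "fin_codim sA I"
proof (rule ccontr)
  assume infinite_codim: "\<not> fin_codim sA I"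
  obtain B where B: "finite B" "T.span (B \<union> T.span (\<iota> ` I)) = UNIV"
    using assms by (auto simp: fin_codim_def)
  obtain C where C: "C \<subseteq> I" "A.independent C" "I \<subseteq> A.span C"
    using A.maximal_independent_subset by blast
  have "A.span (F \<union> I) \<noteq> UNIV" if "finite F" for F
    using infinite_codim that by (auto simp: fin_codim_def)
  moreover have "C \<subseteq> A.span I"
    using C(1) A.span_superset by blast
  ultimately have "\<exists>D. finite D \<and> card D = card B + 1 \<and> C \<inter> D = {} \<and> A.independent (C \<union> D)"
    by (rule A.independent_extension_of_infinite_codim[OF _ C(2)])
  then obtain D where
    D: "finite D" "card D = card B + 1" "C \<inter> D = {}" "A.independent (C \<union> D)"
    by blast
  have inj: "inj_on \<iota> (C \<union> D)" and indep: "T.independent (\<iota> ` C \<union> \<iota> ` D)"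
    using independent_image[OF D(4)] by (simp_all add: image_Un)
  have "\<iota> ` C \<inter> \<iota> ` D = {}"
    using inj_on_image_Int[OF inj, of C D] D(3) by simp
  moreover have "\<iota> ` D \<subseteq> T.span (B \<union> \<iota> ` C)"
  proof -
    have "T.span (\<iota> ` I) \<subseteq> T.span (\<iota> ` C)"
      using C(3) image_span_subset[of C] by (intro T.span_minimal) auto
    then have "T.span (B \<union> T.span (\<iota> ` I)) \<subseteq> T.span (B \<union> \<iota> ` C)"
      using T.span_superset[of "B \<union> \<iota> ` C"] T.span_mono[of "\<iota> ` C" "B \<union> \<iota> ` C"]
      by (intro T.span_minimal) auto
    with B(2) show ?thesis by auto
  qed
  ultimately have "card (\<iota> ` D) \<le> card B"
    using T.independent_complement_card_le[OF B(1) _ indep] D(1) by blast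
  moreover have "card (\<iota> ` D) = card D"
    using inj_on_subset[OF inj] by (intro card_image) simp
  ultimately show False using D(2) by simp
qed

end

theorem lemma5p2:
  fixes \<sigma> :: "'k::field \<Rightarrow> 'K::field"
    and sA :: "'k \<Rightarrow> 'a::ring_1 \<Rightarrow> 'a"
    and sT :: "'K \<Rightarrow> 't::ring_1 \<Rightarrow> 't"
    and \<iota> :: "'a \<Rightarrow> 't"
  assumes "field_ext \<sigma>"
    and "algebra_over sA"
    and "is_base_change \<sigma> sA sT \<iota>"
    and "just_infinite sT"
  shows "just_infinite sA"
proof -
  interpret base_change \<sigma> sA sT \<iota> by (rule base_change.intro) (fact assms(3))
  have "fin_codim sA I" if I: "two_sided_ideal I" "I \<noteq> {0}" for I
  proof -
    obtain x where "x \<in> I" "x \<noteq> 0"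
      using I by (auto simp: two_sided_ideal_def)
    then have "T.span (\<iota> ` I) \<noteq> {0}"
      using nonzero_image T.span_base by blast
    then have "fin_codim sT (T.span (\<iota> ` I))"
      using assms(4) two_sided_ideal_extension[OF I(1)] by (simp add: just_infinite_def)
    then show ?thesis by (rule fin_codim_if_fin_codim_extension)
  qed
  moreover have "\<not> fin_dim sA"
    using assms(4) fin_dim_T_if_fin_dim_A by (auto simp: just_infinite_def)
  ultimately show ?thesis
    using assms(2) by (simp add: just_infinite_def)
qed

end
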